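(* Let $t=\alpha^\mu\beta^\nu$ with $\mu\in\mathbb{Z}_{\ge0}^m$, $\nu\in\mathbb{Z}_{\ge0}^n$. If $t$ has a syl-representation, then $t$ has a res-representation.
   Context: For $M\in\{0,1\}^{m\times n}$: $\bar M_{ij}=1-M_{ij}$; $rs(M)=(\sum_j M_{ij})_i$; $cs(M)=(\sum_i M_{ij})_j$; $ars(M)=(i+\sum_j M_{ij})_{i=1..m}$; $acs(M)=(j+\sum_i M_{ij})_{j=1..n}$. A res-representation of $\alpha^\mu\beta^\nu$ is $\mathcal{R}\in\{0,1\}^{m\times n}$ with $rs(\mathcal{R})=\mu$ and $cs(\bar{\mathcal{R}})=\nu$. $PC(A,B)$ means $\{acs(A)_1,\dots,acs(A)_n,ars(B)_1,\dots,ars(B)_m\}=\{1,\dots,m+n\}$. A syl-representation of $\alpha^\mu\beta^\nu$ is a pair $(\mathcal{S}_1,\mathcal{S}_2)$ in $\{0,1\}^{m\times n}$ with $rs(\mathcal{S}_1)=\mu$, $cs(\mathcal{S}_2)=\nu$, $PC(\mathcal{S}_1,\mathcal{S}_2)$. *)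

theory Defs
  imports Main
begin

(* An m x n 0/1 matrix is modelled as M :: nat => nat => nat, indices i in {1..m}, j in {1..n}
   (entries outside this range are irrelevant). Vectors mu, nu :: nat => nat, 1-based. *)

definition is01 :: "nat \<Rightarrow> nat \<Rightarrow> (nat \<Rightarrow> nat \<Rightarrow> nat) \<Rightarrow> bool" where
  "is01 m n M \<longleftrightarrow> (\<forall>i\<in>{1..m}. \<forall>j\<in>{1..n}. M i j \<in> {0,1})"

definition compl :: "(nat \<Rightarrow> nat \<Rightarrow> nat) \<Rightarrow> nat \<Rightarrow> nat \<Rightarrow> nat" where
  "compl M i j = 1 - M i j"

definition rs :: "nat \<Rightarrow> (nat \<Rightarrow> nat \<Rightarrow> nat) \<Rightarrow> nat \<Rightarrow> nat" where
  "rs n M i = (\<Sum>j=1..n. M i j)"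

definition cs :: "nat \<Rightarrow> (nat \<Rightarrow> nat \<Rightarrow> nat) \<Rightarrow> nat \<Rightarrow> nat" where
  "cs m M j = (\<Sum>i=1..m. M i j)"

definition ars :: "nat \<Rightarrow> (nat \<Rightarrow> nat \<Rightarrow> nat) \<Rightarrow> nat \<Rightarrow> nat" where
  "ars n M i = i + rs n M i"

definition acs :: "nat \<Rightarrow> (nat \<Rightarrow> nat \<Rightarrow> nat) \<Rightarrow> nat \<Rightarrow> nat" where
  "acs m M j = j + cs m M j"

definition PC :: "nat \<Rightarrow> nat \<Rightarrow> (nat \<Rightarrow> nat \<Rightarrow> nat) \<Rightarrow> (nat \<Rightarrow> nat \<Rightarrow> nat) \<Rightarrow> bool" where
  "PC m n A B \<longleftrightarrow> acs m A ` {1..n} \<union> ars n B ` {1..m} = {1..m+n}"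

definition res_rep :: "nat \<Rightarrow> nat \<Rightarrow> (nat \<Rightarrow> nat) \<Rightarrow> (nat \<Rightarrow> nat) \<Rightarrow> (nat \<Rightarrow> nat \<Rightarrow> nat) \<Rightarrow> bool" where
  "res_rep m n \<mu> \<nu> R \<longleftrightarrow> is01 m n R \<and> (\<forall>i\<in>{1..m}. rs n R i = \<mu> i)
     \<and> (\<forall>j\<in>{1..n}. cs m (compl R) j = \<nu> j)"

definition syl_rep :: "nat \<Rightarrow> nat \<Rightarrow> (nat \<Rightarrow> nat) \<Rightarrow> (nat \<Rightarrow> nat) \<Rightarrow> (nat \<Rightarrow> nat \<Rightarrow> nat) \<Rightarrow> (nat \<Rightarrow> nat \<Rightarrow> nat) \<Rightarrow> bool" where
  "syl_rep m n \<mu> \<nu> S1 S2 \<longleftrightarrow> is01 m n S1 \<and> is01 m n S2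
     \<and> (\<forall>i\<in>{1..m}. rs n S1 i = \<mu> i) \<and> (\<forall>j\<in>{1..n}. cs m S2 j = \<nu> j)
     \<and> PC m n S1 S2"

end

(*
  A res-representation is an orientation of the complete bipartite graph on rows {1..m} and
  columns {1..n} in which row i receives mu_i edges and column j receives nu_j edges
  (R i j = 1 iff the edge ij points to row i). Such an orientation exists as soon as the total
  count is right and every rectangle I x J has at most sum_I mu + sum_J nu cells: add the edges
  one at a time; if the new edge could be given to neither endpoint there would be two tight
  rectangles through it, and their union and intersection violate the bound.

  For a syl-representation (S1, S2) the numbers acs(S1)_j and ars(S2)_i enumerate {1..m+n}
  exactly once. Summing them gives the total count. For the rectangle bound pick a threshold T
  above which exactly |J| of the values acs(S1)_j lie; the values above T form the interval
  {T+1..m+n}, and comparing its sum with the trivial bounds on the contributing row and column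
  sums leaves |I| |J| <= sum_I rs(S1) + sum_J cs(S2).
*)

theory Submission
  imports Defs
begin

definition cut_condition :: "'a set \<Rightarrow> 'b set \<Rightarrow> ('a \<Rightarrow> nat) \<Rightarrow> ('b \<Rightarrow> nat) \<Rightarrow> ('a \<times> 'b) set \<Rightarrow> bool"
  where "cut_condition A B \<mu> \<nu> G \<longleftrightarrow> (\<forall>I\<subseteq>A. \<forall>J\<subseteq>B. card (G \<inter> I \<times> J) \<le> sum \<mu> I + sum \<nu> J)"

lemma sum_fun_upd_nat:
  assumes "finite A" "i \<in> A"
  shows "sum (f(i := x)) A + (f i :: nat) = sum f A + x"
  using assms by (simp add: sum.remove)

lemma cut_condition_swap:
  "cut_condition B A \<nu> \<mu> (prod.swap ` G) \<longleftrightarrow> cut_condition A B \<mu> \<nu> G"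
proof -
  have "card (prod.swap ` G \<inter> J \<times> I) = card (G \<inter> I \<times> J)" for I J
  proof -
    have "prod.swap ` G \<inter> J \<times> I = prod.swap ` (G \<inter> I \<times> J)" by auto
    then show ?thesis by (simp add: card_image)
  qed
  then show ?thesis unfolding cut_condition_def by (auto simp: add.commute)
qed

lemma tight_set_through_row:
  assumes "finite A" and "finite G" and "(i, j) \<notin> G" and "i \<in> A"
    and cut: "cut_condition A B \<mu> \<nu> (insert (i, j) G)"
    and not_row: "\<not> (0 < \<mu> i \<and> cut_condition A B (\<mu>(i := \<mu> i - 1)) \<nu> G)"
  shows "\<exists>I\<subseteq>A. \<exists>J\<subseteq>B. i \<in> I \<and> j \<notin> J \<and> sum \<mu> I + sum \<nu> J \<le> card (insert (i, j) G \<inter> I \<times> J)"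
proof (cases "\<mu> i = 0")
  case True
  then have "sum \<mu> {i} + sum \<nu> {} \<le> card (insert (i, j) G \<inter> {i} \<times> {})" by simp
  then show ?thesis using \<open>i \<in> A\<close> by blast
next
  case False
  then obtain I J where IJ: "I \<subseteq> A" "J \<subseteq> B"
    and gt: "sum (\<mu>(i := \<mu> i - 1)) I + sum \<nu> J < card (G \<inter> I \<times> J)"
    using not_row unfolding cut_condition_def by (auto simp: not_le)
  have cut_IJ: "card (insert (i, j) G \<inter> I \<times> J) \<le> sum \<mu> I + sum \<nu> J"
    using cut IJ unfolding cut_condition_def by blast
  have mono: "card (G \<inter> I \<times> J) \<le> card (insert (i, j) G \<inter> I \<times> J)"
    using \<open>finite G\<close> by (intro card_mono) auto
  have "i \<in> I"
  proof (rule ccontr)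
    assume "i \<notin> I"
    then have "sum (\<mu>(i := \<mu> i - 1)) I = sum \<mu> I" by (intro sum.cong) auto
    then show False using gt cut_IJ mono by linarith
  qed
  have dec: "sum (\<mu>(i := \<mu> i - 1)) I + 1 = sum \<mu> I"
    using sum_fun_upd_nat[of I i \<mu> "\<mu> i - 1"] \<open>i \<in> I\<close> IJ \<open>finite A\<close> False
    by (simp add: finite_subset)
  have "j \<notin> J"
  proof
    assume "j \<in> J"
    then have "insert (i, j) G \<inter> I \<times> J = insert (i, j) (G \<inter> I \<times> J)"
      using \<open>i \<in> I\<close> by blast
    then have "card (insert (i, j) G \<inter> I \<times> J) = card (G \<inter> I \<times> J) + 1"
      using \<open>(i, j) \<notin> G\<close> \<open>finite G\<close> by simp
    then show False using gt dec cut_IJ by linarith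
  qed
  moreover have "sum \<mu> I + sum \<nu> J \<le> card (insert (i, j) G \<inter> I \<times> J)"
    using gt dec mono by linarith
  ultimately show ?thesis using IJ \<open>i \<in> I\<close> by blast
qed

lemma tight_set_through_column:
  assumes "finite B" and "finite G" and "(i, j) \<notin> G" and "j \<in> B"
    and cut: "cut_condition A B \<mu> \<nu> (insert (i, j) G)"
    and not_col: "\<not> (0 < \<nu> j \<and> cut_condition A B \<mu> (\<nu>(j := \<nu> j - 1)) G)"
  shows "\<exists>I\<subseteq>A. \<exists>J\<subseteq>B. j \<in> J \<and> i \<notin> I \<and> sum \<mu> I + sum \<nu> J \<le> card (insert (i, j) G \<inter> I \<times> J)"
proof -
  have "prod.swap ` insert (i, j) G = insert (j, i) (prod.swap ` G)" by simp
  then have "cut_condition B A \<nu> \<mu> (insert (j, i) (prod.swap ` G))"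
    using cut cut_condition_swap[of B A \<nu> \<mu> "insert (i, j) G"] by simp
  moreover have "\<not> (0 < \<nu> j \<and> cut_condition B A (\<nu>(j := \<nu> j - 1)) \<mu> (prod.swap ` G))"
    using not_col by (subst cut_condition_swap)
  moreover have "(j, i) \<notin> prod.swap ` G" using \<open>(i, j) \<notin> G\<close> by auto
  ultimately obtain J I where IJ: "J \<subseteq> B" "I \<subseteq> A" "j \<in> J" "i \<notin> I"
    and tight: "sum \<nu> J + sum \<mu> I \<le> card (insert (j, i) (prod.swap ` G) \<inter> J \<times> I)"
    using tight_set_through_row[of B "prod.swap ` G" j i A \<nu> \<mu>] \<open>finite B\<close> \<open>finite G\<close> \<open>j \<in> B\<close>
    by auto
  have "insert (j, i) (prod.swap ` G) \<inter> J \<times> I = prod.swap ` (insert (i, j) G \<inter> I \<times> J)" by auto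
  then have "card (insert (j, i) (prod.swap ` G) \<inter> J \<times> I) = card (insert (i, j) G \<inter> I \<times> J)"
    by (simp add: card_image)
  then show ?thesis using IJ tight by (metis add.commute)
qed

lemma cut_condition_remove_edge:
  assumes "finite A" "finite B" "finite G" "(i, j) \<notin> G" "i \<in> A" "j \<in> B"
    and cut: "cut_condition A B \<mu> \<nu> (insert (i, j) G)"
  shows "(0 < \<mu> i \<and> cut_condition A B (\<mu>(i := \<mu> i - 1)) \<nu> G)
    \<or> (0 < \<nu> j \<and> cut_condition A B \<mu> (\<nu>(j := \<nu> j - 1)) G)"
proof (rule ccontr)
  assume no_choice: "\<not> ?thesis"
  define H where "H = insert (i, j) G"
  obtain I1 J1 where sub1: "I1 \<subseteq> A" "J1 \<subseteq> B" and ij1: "i \<in> I1" "j \<notin> J1"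
    and tight1: "sum \<mu> I1 + sum \<nu> J1 \<le> card (H \<inter> I1 \<times> J1)"
    using tight_set_through_row[OF \<open>finite A\<close> \<open>finite G\<close> \<open>(i, j) \<notin> G\<close> \<open>i \<in> A\<close> cut] no_choice
    unfolding H_def by blast
  obtain I2 J2 where sub2: "I2 \<subseteq> A" "J2 \<subseteq> B" and ij2: "j \<in> J2" "i \<notin> I2"
    and tight2: "sum \<mu> I2 + sum \<nu> J2 \<le> card (H \<inter> I2 \<times> J2)"
    using tight_set_through_column[OF \<open>finite B\<close> \<open>finite G\<close> \<open>(i, j) \<notin> G\<close> \<open>j \<in> B\<close> cut] no_choice
    unfolding H_def by blast
  let ?E1 = "H \<inter> I1 \<times> J1" and ?E2 = "H \<inter> I2 \<times> J2"
  have fin: "finite I1" "finite I2" "finite J1" "finite J2"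
    using sub1 sub2 \<open>finite A\<close> \<open>finite B\<close> by (meson finite_subset)+
  have "finite H" using \<open>finite G\<close> by (simp add: H_def)
  have cut_H: "card (H \<inter> I \<times> J) \<le> sum \<mu> I + sum \<nu> J" if "I \<subseteq> A" "J \<subseteq> B" for I J
    using cut that unfolding cut_condition_def H_def by blast
  have "(i, j) \<in> H \<inter> (I1 \<union> I2) \<times> (J1 \<union> J2)" "(i, j) \<notin> ?E1 \<union> ?E2"
    using ij1 ij2 by (auto simp: H_def)
  then have "?E1 \<union> ?E2 \<subset> H \<inter> (I1 \<union> I2) \<times> (J1 \<union> J2)" by blast
  then have "card (?E1 \<union> ?E2) < card (H \<inter> (I1 \<union> I2) \<times> (J1 \<union> J2))"
    using \<open>finite H\<close> by (intro psubset_card_mono) auto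
  also have "\<dots> \<le> sum \<mu> (I1 \<union> I2) + sum \<nu> (J1 \<union> J2)"
    using sub1 sub2 by (intro cut_H) auto
  finally have union: "card (?E1 \<union> ?E2) < sum \<mu> (I1 \<union> I2) + sum \<nu> (J1 \<union> J2)" .
  have "?E1 \<inter> ?E2 = H \<inter> (I1 \<inter> I2) \<times> (J1 \<inter> J2)" by blast
  also have "card \<dots> \<le> sum \<mu> (I1 \<inter> I2) + sum \<nu> (J1 \<inter> J2)"
    using sub1 sub2 by (intro cut_H) auto
  finally have inter: "card (?E1 \<inter> ?E2) \<le> sum \<mu> (I1 \<inter> I2) + sum \<nu> (J1 \<inter> J2)" .
  have "card ?E1 + card ?E2 = card (?E1 \<union> ?E2) + card (?E1 \<inter> ?E2)"
    using \<open>finite H\<close> by (intro card_Un_Int) auto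
  moreover have "sum \<mu> (I1 \<union> I2) + sum \<mu> (I1 \<inter> I2) = sum \<mu> I1 + sum \<mu> I2"
    "sum \<nu> (J1 \<union> J2) + sum \<nu> (J1 \<inter> J2) = sum \<nu> J1 + sum \<nu> J2"
    using fin by (simp_all add: sum.union_inter)
  ultimately show False
    using union inter tight1 tight2 by linarith
qed

lemma card_row_insert:
  assumes "finite F" "(i, j) \<notin> F"
  shows "card {j'. (i', j') \<in> insert (i, j) F} = card {j'. (i', j') \<in> F} + (if i' = i then 1 else 0)"
proof -
  have fin: "finite {j'. (i', j') \<in> F}"
    using \<open>finite F\<close> by (rule finite_subset[rotated, OF finite_imageI[of _ snd]]) force
  show ?thesis
  proof (cases "i' = i")
    case True
    then have "{j'. (i', j') \<in> insert (i, j) F} = insert j {j'. (i', j') \<in> F}" by auto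
    then show ?thesis using True fin \<open>(i, j) \<notin> F\<close> by simp
  qed simp
qed

lemma card_column_insert:
  assumes "finite F" "(i, j) \<notin> F"
  shows "card {i'. (i', j') \<in> insert (i, j) F} = card {i'. (i', j') \<in> F} + (if j' = j then 1 else 0)"
proof -
  have fin: "finite {i'. (i', j') \<in> F}"
    using \<open>finite F\<close> by (rule finite_subset[rotated, OF finite_imageI[of _ fst]]) force
  show ?thesis
  proof (cases "j' = j")
    case True
    then have "{i'. (i', j') \<in> insert (i, j) F} = insert i {i'. (i', j') \<in> F}" by auto
    then show ?thesis using True fin \<open>(i, j) \<notin> F\<close> by simp
  qed simp
qed

lemma orientation_exists:
  assumes "finite G" "finite A" "finite B" "G \<subseteq> A \<times> B"
    and "card G = sum \<mu> A + sum \<nu> B" and "cut_condition A B \<mu> \<nu> G"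
  shows "\<exists>F\<subseteq>G. (\<forall>i\<in>A. card {j. (i, j) \<in> F} = \<mu> i) \<and> (\<forall>j\<in>B. card {i. (i, j) \<in> G - F} = \<nu> j)"
  using assms
proof (induction G arbitrary: \<mu> \<nu> rule: finite_induct)
  case empty
  then have "\<forall>i\<in>A. \<mu> i = 0" "\<forall>j\<in>B. \<nu> j = 0" by simp_all
  then show ?case by simp
next
  case (insert e G \<mu> \<nu>)
  obtain i j where e: "e = (i, j)" by force
  have ij: "i \<in> A" "j \<in> B" and "G \<subseteq> A \<times> B" using insert.prems(3) e by auto
  have card_G: "card G + 1 = sum \<mu> A + sum \<nu> B"
    using insert.hyps insert.prems(4) by simp
  have "cut_condition A B \<mu> \<nu> (insert (i, j) G)" using insert.prems(5) e by simp
  from cut_condition_remove_edge[OF \<open>finite A\<close> \<open>finite B\<close> \<open>finite G\<close> insert.hyps(2)[unfolded e] ij this]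
  consider "0 < \<mu> i" "cut_condition A B (\<mu>(i := \<mu> i - 1)) \<nu> G"
    | "0 < \<nu> j" "cut_condition A B \<mu> (\<nu>(j := \<nu> j - 1)) G"
    by (elim disjE conjE) (simp_all add: that)
  then show ?case
  proof cases
    case 1
    have "card G = sum (\<mu>(i := \<mu> i - 1)) A + sum \<nu> B"
      using sum_fun_upd_nat[OF \<open>finite A\<close> \<open>i \<in> A\<close>, of \<mu> "\<mu> i - 1"] card_G 1 by linarith
    then obtain F where F: "F \<subseteq> G" "\<forall>i'\<in>A. card {j'. (i', j') \<in> F} = (\<mu>(i := \<mu> i - 1)) i'"
      "\<forall>j'\<in>B. card {i'. (i', j') \<in> G - F} = \<nu> j'"
      using insert.IH[of "\<mu>(i := \<mu> i - 1)" \<nu>] insert.prems \<open>G \<subseteq> A \<times> B\<close> 1 by blast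
    have "finite F" "(i, j) \<notin> F" using F(1) insert.hyps e finite_subset by auto
    have "card {j'. (i', j') \<in> insert e F} = \<mu> i'" if "i' \<in> A" for i'
      using card_row_insert[OF \<open>finite F\<close> \<open>(i, j) \<notin> F\<close>, of i'] F(2) that 1
      by (simp add: e)
    moreover have "insert e G - insert e F = G - F" using insert.hyps(2) F(1) by blast
    ultimately show ?thesis using F by (intro exI[of _ "insert e F"]) auto
  next
    case 2
    have "card G = sum \<mu> A + sum (\<nu>(j := \<nu> j - 1)) B"
      using sum_fun_upd_nat[OF \<open>finite B\<close> \<open>j \<in> B\<close>, of \<nu> "\<nu> j - 1"] card_G 2 by linarith
    then obtain F where F: "F \<subseteq> G" "\<forall>i'\<in>A. card {j'. (i', j') \<in> F} = \<mu> i'"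
      "\<forall>j'\<in>B. card {i'. (i', j') \<in> G - F} = (\<nu>(j := \<nu> j - 1)) j'"
      using insert.IH[of \<mu> "\<nu>(j := \<nu> j - 1)"] insert.prems \<open>G \<subseteq> A \<times> B\<close> 2 by blast
    have "insert e G - F = insert (i, j) (G - F)" "(i, j) \<notin> G - F"
      using F(1) insert.hyps e by auto
    then have "card {i'. (i', j') \<in> insert e G - F} = \<nu> j'" if "j' \<in> B" for j'
      using card_column_insert[of "G - F" i j j'] F(3) that 2 insert.hyps(1) by simp
    then show ?thesis using F by (intro exI[of _ F]) auto
  qed
qed

lemma sum_nat_set_ge:
  fixes V :: "nat set"
  assumes "finite V" "\<forall>x\<in>V. c \<le> x"
  shows "2 * (card V * c) + card V * card V \<le> 2 * \<Sum>V + card V"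
  using assms
proof (induction "card V" arbitrary: V)
  case (Suc k)
  define M where "M = Max V"
  have "V \<noteq> {}" using Suc.hyps(2) by auto
  then have "M \<in> V" using Suc.prems(1) M_def by simp
  have k: "card (V - {M}) = k" using Suc.hyps(2) \<open>M \<in> V\<close> by simp
  have IH: "2 * (k * c) + k * k \<le> 2 * \<Sum>(V - {M}) + k"
    using Suc.hyps(1)[of "V - {M}"] k Suc.prems by auto
  have "V \<subseteq> {c..M}" using Suc.prems M_def by auto
  then have "Suc k \<le> Suc M - c" using card_mono[of "{c..M}" V] Suc.hyps(2) by simp
  moreover have "\<Sum>V = M + \<Sum>(V - {M})" using sum.remove[OF Suc.prems(1) \<open>M \<in> V\<close>] by simp
  ultimately show ?case using IH Suc.hyps(2)[symmetric] by (simp add: algebra_simps)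
qed simp

lemma sum_nat_set_le:
  fixes V :: "nat set"
  assumes "finite V" "\<forall>x\<in>V. x \<le> c"
  shows "2 * \<Sum>V + card V * card V \<le> 2 * (card V * c) + card V"
  using assms
proof (induction "card V" arbitrary: V)
  case (Suc k)
  define M where "M = Min V"
  have "V \<noteq> {}" using Suc.hyps(2) by auto
  then have "M \<in> V" using Suc.prems(1) M_def by simp
  have k: "card (V - {M}) = k" using Suc.hyps(2) \<open>M \<in> V\<close> by simp
  have IH: "2 * \<Sum>(V - {M}) + k * k \<le> 2 * (k * c) + k"
    using Suc.hyps(1)[of "V - {M}"] k Suc.prems by auto
  have "V \<subseteq> {M..c}" using Suc.prems M_def by auto
  then have "Suc k \<le> Suc c - M" using card_mono[of "{M..c}" V] Suc.hyps(2) by simp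
  moreover have "\<Sum>V = M + \<Sum>(V - {M})" using sum.remove[OF Suc.prems(1) \<open>M \<in> V\<close>] by simp
  ultimately show ?case using IH Suc.hyps(2)[symmetric] by (simp add: algebra_simps)
qed simp

lemma exists_threshold_card_above:
  fixes a :: "'a \<Rightarrow> nat"
  assumes "finite A" "inj_on a A" "\<forall>j\<in>A. 0 < a j \<and> a j \<le> N" "q \<le> card A"
  shows "\<exists>T\<le>N. card {j\<in>A. T < a j} = q"
proof -
  define f where "f T = card {j\<in>A. T < a j}" for T
  have step: "f T \<le> f (Suc T) + 1" for T
  proof -
    have "f T \<le> card ({j\<in>A. Suc T < a j} \<union> {j\<in>A. a j = Suc T})"
      unfolding f_def using \<open>finite A\<close> by (intro card_mono) auto
    also have "\<dots> \<le> f (Suc T) + card {j\<in>A. a j = Suc T}"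
      unfolding f_def by (rule card_Un_le)
    also have "card {j\<in>A. a j = Suc T} \<le> card {Suc T}"
      using inj_on_subset[OF \<open>inj_on a A\<close>] by (intro card_inj_on_le[of a]) auto
    finally show ?thesis by simp
  qed
  have anti: "f (Suc T) \<le> f T" for T
    unfolding f_def using \<open>finite A\<close> by (intro card_mono) auto
  have "\<bar>- int (f (i + 1)) - - int (f i)\<bar> \<le> 1" for i
    using step[of i] anti[of i] by (simp add: abs_le_iff)
  moreover have "f 0 = card A"
    using assms(3) unfolding f_def by (intro arg_cong[of _ _ card]) auto
  moreover have "f N = 0"
    using assms(1,3) unfolding f_def by (simp add: not_less)
  ultimately obtain T where "T \<le> N" "- int (f T) = - int q"
    using nat0_intermed_int_val[of N "\<lambda>T. - int (f T)" "- int q"] \<open>q \<le> card A\<close> by auto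
  then show ?thesis unfolding f_def by auto
qed

lemma inj_on_disjoint_if_card_Un_image:
  assumes "finite X" "finite Y" "card (f ` X \<union> g ` Y) = card X + card Y"
  shows "inj_on f X" "inj_on g Y" "f ` X \<inter> g ` Y = {}"
proof -
  have "card (f ` X \<union> g ` Y) + card (f ` X \<inter> g ` Y) = card (f ` X) + card (g ` Y)"
    using assms(1,2) by (intro card_Un_Int[symmetric]) auto
  moreover have "card (f ` X) \<le> card X" "card (g ` Y) \<le> card Y"
    by (simp_all add: card_image_le assms(1,2))
  ultimately have "card (f ` X) = card X" "card (g ` Y) = card Y" "card (f ` X \<inter> g ` Y) = 0"
    using assms(3) by linarith+
  then show "inj_on f X" "inj_on g Y" "f ` X \<inter> g ` Y = {}"
    using assms(1,2) by (simp_all add: eq_card_imp_inj_on)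
qed

lemma PC_partition:
  assumes "PC m n X Y"
  shows "inj_on (acs m X) {1..n}" "inj_on (ars n Y) {1..m}"
    "acs m X ` {1..n} \<inter> ars n Y ` {1..m} = {}"
  using inj_on_disjoint_if_card_Un_image[of "{1..n}" "{1..m}" "acs m X" "ars n Y"] assms
  by (simp_all add: PC_def)

lemma PC_sum_rs_cs:
  assumes "PC m n X Y"
  shows "sum (rs n X) {1..m} + sum (cs m Y) {1..n} = m * n"
proof -
  have gauss: "2 * \<Sum>{1..k} = k * (k + 1)" for k :: nat
    using double_gauss_sum_from_Suc_0[of k, where 'a = nat] by simp
  note part = PC_partition[OF assms]
  have "\<Sum>{1..m + n} = \<Sum>(acs m X ` {1..n}) + \<Sum>(ars n Y ` {1..m})"
    using assms part(3) unfolding PC_def by (simp add: sum.union_disjoint[symmetric])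
  also have "\<dots> = sum (acs m X) {1..n} + sum (ars n Y) {1..m}"
    using part(1,2) by (simp add: sum.reindex)
  also have "\<dots> = \<Sum>{1..n} + \<Sum>{1..m} + sum (cs m X) {1..n} + sum (rs n Y) {1..m}"
    unfolding acs_def ars_def by (simp add: sum.distrib)
  also have "sum (cs m X) {1..n} = sum (rs n X) {1..m}"
    unfolding cs_def rs_def by (rule sum.swap)
  also have "sum (rs n Y) {1..m} = sum (cs m Y) {1..n}"
    unfolding cs_def rs_def by (rule sum.swap)
  finally show ?thesis
    using gauss[of "m + n"] gauss[of m] gauss[of n] by (simp add: algebra_simps)
qed

lemma sum_cs_add_le:
  assumes "is01 m n X" "I \<subseteq> {1..m}" "J \<subseteq> {1..n}"
  shows "sum (cs m X) J + card J * card I \<le> sum (rs n X) I + card J * m"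
proof -
  have "card I \<le> m" using card_mono[OF _ assms(2)] by simp
  have X01: "X i j \<le> 1" if "i \<in> {1..m}" "j \<in> {1..n}" for i j
    using assms(1) that unfolding is01_def by fastforce
  have col: "cs m X j + card I \<le> (\<Sum>i\<in>I. X i j) + m" if "j \<in> J" for j
  proof -
    have "(\<Sum>i\<in>{1..m} - I. X i j) \<le> (\<Sum>i\<in>{1..m} - I. 1)"
      using X01 assms(3) that by (intro sum_mono) auto
    also have "\<dots> = m - card I"
      using assms(2) by (simp add: card_Diff_subset finite_subset)
    finally show ?thesis
      using sum.subset_diff[OF assms(2), of "\<lambda>i. X i j"] \<open>card I \<le> m\<close>
      unfolding cs_def by simp
  qed
  have "sum (cs m X) J + card J * card I = (\<Sum>j\<in>J. cs m X j + card I)"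
    by (simp add: sum.distrib)
  also have "\<dots> \<le> (\<Sum>j\<in>J. (\<Sum>i\<in>I. X i j) + m)"
    using col by (rule sum_mono)
  also have "\<dots> = (\<Sum>i\<in>I. \<Sum>j\<in>J. X i j) + card J * m"
    by (simp add: sum.distrib sum.swap[of _ J])
  also have "(\<Sum>i\<in>I. \<Sum>j\<in>J. X i j) \<le> sum (rs n X) I"
    unfolding rs_def using assms(3) by (intro sum_mono sum_mono2) auto
  finally show ?thesis by simp
qed

lemma PC_sum_above_threshold:
  assumes "PC m n X Y" "T \<le> m + n"
  defines "J0 \<equiv> {j\<in>{1..n}. T < acs m X j}" and "I0 \<equiv> {i\<in>{1..m}. T < ars n Y i}"
  shows "2 * ((card J0 + card I0) * (m + n)) + (card J0 + card I0)
    \<le> 2 * (sum (acs m X) J0 + sum (ars n Y) I0) + (card J0 + card I0) * (card J0 + card I0)"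
proof -
  note part = PC_partition[OF assms(1)]
  let ?V = "acs m X ` J0 \<union> ars n Y ` I0" and ?s = "card J0 + card I0"
  have cover: "acs m X ` {1..n} \<union> ars n Y ` {1..m} = {1..m + n}"
    using assms(1) unfolding PC_def .
  have "?V = {1..m + n} \<inter> {Suc T..}"
    unfolding J0_def I0_def cover[symmetric] by auto
  also have "\<dots> = {Suc T..m + n}" by auto
  finally have V: "?V = {Suc T..m + n}" .
  have inj: "inj_on (acs m X) J0" "inj_on (ars n Y) I0"
    unfolding J0_def I0_def by (rule inj_on_subset[OF part(1)] inj_on_subset[OF part(2)], blast)+
  have disj: "acs m X ` J0 \<inter> ars n Y ` I0 = {}"
    using part(3) unfolding J0_def I0_def by blast
  have fin: "finite J0" "finite I0" by (simp_all add: J0_def I0_def)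
  have "card ?V = card (acs m X ` J0) + card (ars n Y ` I0)"
    using fin disj by (intro card_Un_disjoint) auto
  also have "\<dots> = ?s"
    using inj by (simp add: card_image)
  finally have card_V: "card ?V = ?s" .
  then have "?s + T = m + n"
    using V assms(2) by simp
  then have "?s * (m + n) + ?s = ?s * Suc T + ?s * ?s"
    by (simp add: algebra_simps flip: \<open>?s + T = m + n\<close>)
  moreover have "\<Sum>?V = \<Sum>(acs m X ` J0) + \<Sum>(ars n Y ` I0)"
    using fin disj by (intro sum.union_disjoint) auto
  moreover have "\<dots> = sum (acs m X) J0 + sum (ars n Y) I0"
    using inj by (simp add: sum.reindex)
  moreover have "2 * (card ?V * Suc T) + card ?V * card ?V \<le> 2 * \<Sum>?V + card ?V"
    unfolding V by (intro sum_nat_set_ge) auto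
  ultimately show ?thesis
    using card_V by simp
qed

lemma PC_mass_above_threshold:
  assumes "PC m n X Y" "T \<le> m + n"
  defines "J0 \<equiv> {j\<in>{1..n}. T < acs m X j}" and "I0 \<equiv> {i\<in>{1..m}. T < ars n Y i}"
  shows "card J0 * m + card I0 * n \<le> sum (cs m X) J0 + sum (rs n Y) I0 + card J0 * card I0"
proof -
  have "2 * \<Sum>J0 + card J0 * card J0 \<le> 2 * (card J0 * n) + card J0"
    unfolding J0_def by (intro sum_nat_set_le) auto
  moreover have "2 * \<Sum>I0 + card I0 * card I0 \<le> 2 * (card I0 * m) + card I0"
    unfolding I0_def by (intro sum_nat_set_le) auto
  moreover have "sum (acs m X) J0 = \<Sum>J0 + sum (cs m X) J0"
    and "sum (ars n Y) I0 = \<Sum>I0 + sum (rs n Y) I0"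
    unfolding acs_def ars_def by (simp_all add: sum.distrib)
  moreover have "(card J0 + card I0) * (m + n) = card J0 * m + card J0 * n + card I0 * m + card I0 * n"
    and "(card J0 + card I0) * (card J0 + card I0) = card J0 * card J0 + card I0 * card I0 + 2 * (card J0 * card I0)"
    by (simp_all add: algebra_simps)
  ultimately show ?thesis
    using PC_sum_above_threshold[OF assms(1,2), folded J0_def I0_def] by simp
qed

lemma PC_card_Times_le:
  assumes X: "is01 m n X" and Y: "is01 m n Y" and pc: "PC m n X Y"
    and I: "I \<subseteq> {1..m}" and J: "J \<subseteq> {1..n}"
  shows "card I * card J \<le> sum (rs n X) I + sum (cs m Y) J"
proof -
  have "acs m X j \<in> {1..m + n}" if "j \<in> {1..n}" for j
    using pc that unfolding PC_def by blast
  then have "\<forall>j\<in>{1..n}. 0 < acs m X j \<and> acs m X j \<le> m + n" by fastforce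
  moreover have "card J \<le> card {1..n}" using J by (intro card_mono) auto
  ultimately obtain T where "T \<le> m + n" and card_J0: "card {j\<in>{1..n}. T < acs m X j} = card J"
    using exists_threshold_card_above[OF _ PC_partition(1)[OF pc]] by blast
  define J0 where "J0 = {j\<in>{1..n}. T < acs m X j}"
  define I0 where "I0 = {i\<in>{1..m}. T < ars n Y i}"
  have J0: "J0 \<subseteq> {1..n}" "card J0 = card J" and I0: "I0 \<subseteq> {1..m}"
    using card_J0 unfolding J0_def I0_def by auto
  have "sum (cs m X) J0 + card J0 * card I \<le> sum (rs n X) I + card J0 * m"
    using X I J0(1) by (rule sum_cs_add_le)
  moreover have "sum (rs n Y) I0 + card J0 * card I0 \<le> sum (cs m Y) J + card I0 * n"
  proof -
    have "is01 n m (\<lambda>j i. Y i j)" using Y unfolding is01_def by blast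
    from sum_cs_add_le[OF this J I0] show ?thesis
      unfolding cs_def rs_def J0(2) by (simp add: mult.commute)
  qed
  ultimately show ?thesis
    using PC_mass_above_threshold[OF pc \<open>T \<le> m + n\<close>, folded J0_def I0_def] J0(2)
    by (simp add: mult.commute)
qed

lemma res_rep_of_orientation:
  assumes "F \<subseteq> {1..m} \<times> {1..n}"
    and "\<forall>i\<in>{1..m}. card {j. (i, j) \<in> F} = \<mu> i"
    and "\<forall>j\<in>{1..n}. card {i. (i, j) \<in> {1..m} \<times> {1..n} - F} = \<nu> j"
  shows "res_rep m n \<mu> \<nu> (\<lambda>i j. of_bool ((i, j) \<in> F))"
  unfolding res_rep_def
proof (intro conjI ballI)
  show "is01 m n (\<lambda>i j. of_bool ((i, j) \<in> F))" unfolding is01_def by simp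
  fix i assume "i \<in> {1..m}"
  have "{1..n} \<inter> {j. (i, j) \<in> F} = {j. (i, j) \<in> F}" using assms(1) by blast
  then show "rs n (\<lambda>i j. of_bool ((i, j) \<in> F)) i = \<mu> i"
    unfolding rs_def using assms(2) \<open>i \<in> {1..m}\<close> by simp
next
  fix j assume "j \<in> {1..n}"
  have "compl (\<lambda>i j. of_bool ((i, j) \<in> F)) i j = of_bool ((i, j) \<notin> F)" for i
    unfolding compl_def by simp
  moreover have "{1..m} \<inter> {i. (i, j) \<notin> F} = {i. (i, j) \<in> {1..m} \<times> {1..n} - F}"
    using \<open>j \<in> {1..n}\<close> by blast
  ultimately show "cs m (compl (\<lambda>i j. of_bool ((i, j) \<in> F))) j = \<nu> j"
    unfolding cs_def using assms(3) \<open>j \<in> {1..n}\<close> by simp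
qed

theorem mainTheorem10:
  fixes m n :: nat and \<mu> \<nu> :: "nat \<Rightarrow> nat"
  assumes "\<exists>S1 S2. syl_rep m n \<mu> \<nu> S1 S2"
  shows "\<exists>R. res_rep m n \<mu> \<nu> R"
proof -
  obtain S1 S2 where "is01 m n S1" "is01 m n S2" "PC m n S1 S2"
    and \<mu>: "\<forall>i\<in>{1..m}. rs n S1 i = \<mu> i" and \<nu>: "\<forall>j\<in>{1..n}. cs m S2 j = \<nu> j"
    using assms unfolding syl_rep_def by blast
  have sum_rs: "sum (rs n S1) I = sum \<mu> I" if "I \<subseteq> {1..m}" for I
    using \<mu> that by (intro sum.cong) auto
  have sum_cs: "sum (cs m S2) J = sum \<nu> J" if "J \<subseteq> {1..n}" for J
    using \<nu> that by (intro sum.cong) auto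
  let ?G = "{1..m} \<times> {1..n}"
  have "cut_condition {1..m} {1..n} \<mu> \<nu> ?G"
    unfolding cut_condition_def
    using PC_card_Times_le[OF \<open>is01 m n S1\<close> \<open>is01 m n S2\<close> \<open>PC m n S1 S2\<close>]
    by (simp add: Int_absorb1 Sigma_mono card_cartesian_product sum_rs sum_cs)
  moreover have "card ?G = sum \<mu> {1..m} + sum \<nu> {1..n}"
    using PC_sum_rs_cs[OF \<open>PC m n S1 S2\<close>] sum_rs sum_cs by (simp add: card_cartesian_product)
  ultimately obtain F where "F \<subseteq> ?G" "\<forall>i\<in>{1..m}. card {j. (i, j) \<in> F} = \<mu> i"
    "\<forall>j\<in>{1..n}. card {i. (i, j) \<in> ?G - F} = \<nu> j"
    using orientation_exists[of ?G "{1..m}" "{1..n}" \<mu> \<nu>] by auto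
  then show ?thesis by (blast intro: res_rep_of_orientation)
qed

end
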